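(* (a) Let $\beta$ be an irrational real number and let $w\in\{\mathrm{N},\mathrm{E}\}^*$ be a $\beta$-Dyck word. Then $\mathrm{sw}_\beta(w)$ is a $\beta$-Dyck word. (b) Let $r,s\in\mathbb{Z}$ and let $w\in\{\mathrm{N},\mathrm{E}\}^*$ be an $(r,s)$-Dyck word. Then $\mathrm{sw}^-_{r,s}(w)$ is an $(r,s)$-Dyck word.
   Context: $\{\mathrm{N},\mathrm{E}\}^*$ is the set of finite words over the letters $\mathrm{N},\mathrm{E}$. A word $w=w_1\cdots w_n$ is identified with the lattice path starting at $(0,0)$ whose $i$-th step is a unit north step if $w_i=\mathrm{N}$ and a unit east step if $w_i=\mathrm{E}$. Each step is thought of as a "wand" whose tip is the endpoint of the step. For integers $r,s$, the $(r,s)$-level of a lattice point $(x,y)$ is $ry+sx$. Under the east-north convention, the level $l_i$ of the letter $w_i$ is the $(r,s)$-level of the endpoint of the $i$-th step; equivalently $l_0=0$ and $l_i=l_{i-1}+r$ if $w_i=\mathrm{N}$, $l_i=l_{i-1}+s$ if $w_i=\mathrm{E}$. A word $w$ is an $(r,s)$-Dyck word if all its letters have nonnegative level, i.e. $l_i\ge 0$ for $1\le i\le n$. The sweep map $\mathrm{sw}^-_{r,s}:\{\mathrm{N},\mathrm{E}\}^*\to\{\mathrm{N},\mathrm{E}\}^*$ sends $w$ to the word obtained as follows: start with the empty word; for $k=-1,-2,-3,\ldots$ and then for $k=\ldots,3,2,1,0$ (i.e. first all negative values in decreasing order, then all nonnegative values in decreasing order), scan $w$ from right to left and append each letter $w_i$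 ($1\le i\le n$) with $l_i=k$. For irrational $\beta$, the level of a step is $y-\beta x$ where $(x,y)$ is the endpoint (tip) of the step; distinct steps have distinct such levels. The irrational sweep map $\mathrm{sw}_\beta(w)$ lists the letters of $w$ in the order in which a line $y-\beta x=k$ hits their tips as $k$ decreases from just below $0$ to $-\infty$ and then from $+\infty$ down to $0$; i.e., first the letters with negative level in decreasing order of level, then the letters with positive level in decreasing order of level. A word $w$ is a $\beta$-Dyck word if every lattice point $(x,y)$ visited by its path satisfies $y-\beta x\ge 0$. *)

theory Defs
  imports Complex_Main
begin

datatype letter = N | E

definition cntN :: "letter list \<Rightarrow> nat" where
  "cntN xs = length (filter (\<lambda>c. c = N) xs)"

definition cntE :: "letter list \<Rightarrow> nat" where
  "cntE xs = length (filter (\<lambda>c. c = E) xs)"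

text \<open>(r,s)-level of the i-th letter (1-based) = level of the endpoint of the i-th step;
  index 0 gives the origin.\<close>
definition rs_level :: "int \<Rightarrow> int \<Rightarrow> letter list \<Rightarrow> nat \<Rightarrow> int" where
  "rs_level r s w i = r * int (cntN (take i w)) + s * int (cntE (take i w))"

definition rs_dyck :: "int \<Rightarrow> int \<Rightarrow> letter list \<Rightarrow> bool" where
  "rs_dyck r s w \<longleftrightarrow> (\<forall>i\<in>{1..length w}. rs_level r s w i \<ge> 0)"

text \<open>Sweep map sw^-_{r,s}: for k = -1,-2,...,-M and then k = M,...,1,0, scan w from right
  to left and append the letters of level k. M bounds all absolute levels.\<close>
definition sweep_rs :: "int \<Rightarrow> int \<Rightarrow> letter list \<Rightarrow> letter list" where
  "sweep_rs r s w =
    (let n = length w; M = int n * (\<bar>r\<bar> + \<bar>s\<bar>);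
         letters = (\<lambda>k. [w ! (i - 1). i \<leftarrow> rev [1..<n+1], rs_level r s w i = k])
     in concat (map letters (rev [-M..-1] @ rev [0..M])))"

definition beta_level :: "real \<Rightarrow> letter list \<Rightarrow> nat \<Rightarrow> real" where
  "beta_level \<beta> w i = real (cntN (take i w)) - \<beta> * real (cntE (take i w))"

definition beta_dyck :: "real \<Rightarrow> letter list \<Rightarrow> bool" where
  "beta_dyck \<beta> w \<longleftrightarrow> (\<forall>i\<le>length w. beta_level \<beta> w i \<ge> 0)"

definition sweep_beta :: "real \<Rightarrow> letter list \<Rightarrow> letter list" where
  "sweep_beta \<beta> w =
    (let n = length w; lv = beta_level \<beta> w; idx = [1..<n+1]
     in map (\<lambda>i. w ! (i - 1))
          (sort_key (\<lambda>i. - lv i) (filter (\<lambda>i. lv i < 0) idx)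
           @ sort_key (\<lambda>i. - lv i) (filter (\<lambda>i. lv i > 0) idx)))"

end

theory Submission
  imports Defs
begin

text \<open>
  Both sweep maps list the letters of a Dyck word in decreasing order of level (no letter has
  negative level). Fix a prefix of the swept word of length \<open>j\<close> and let \<open>k \<ge> 0\<close> be the
  smallest level among its letters: these letters occupy a set \<open>S\<close> of positions of \<open>w\<close> where the
  level is \<open>\<ge> k\<close>, while outside \<open>S\<close> it is \<open>\<le> k\<close>. The level of the prefix is the sum of the
  level increments of \<open>w\<close> over \<open>S\<close>. Telescoping \<open>max k (level)\<close> along \<open>w\<close>, the increments outside
  \<open>S\<close> contribute at most \<open>0\<close> and those inside at most their true value, while the total is
  \<open>\<ge> 0\<close>; so the prefix has nonnegative level.
\<close>

definition path_level :: "'a::linordered_idom \<Rightarrow> 'a \<Rightarrow> letter list \<Rightarrow> nat \<Rightarrow> 'a" where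
  "path_level a b w i = a * of_nat (cntN (take i w)) + b * of_nat (cntE (take i w))"

lemma beta_level_eq_path_level: "beta_level \<beta> w i = path_level 1 (- \<beta>) w i"
  by (simp add: beta_level_def path_level_def)

lemma rs_level_eq_path_level: "rs_level r s w i = path_level r s w i"
  by (simp add: rs_level_def path_level_def)

lemma path_level_0 [simp]: "path_level a b w 0 = 0"
  by (simp add: path_level_def cntN_def cntE_def)

lemma path_level_increment:
  assumes "1 \<le> i" "i \<le> length w"
  shows "path_level a b w i - path_level a b w (i - 1) = (if w ! (i - 1) = N then a else b)"
proof -
  have "take i w = take (i - 1) w @ [w ! (i - 1)]"
    using assms take_Suc_conv_app_nth[of "i - 1" w] by simp
  then show ?thesis
    by (cases "w ! (i - 1)") (simp_all add: path_level_def cntN_def cntE_def algebra_simps)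
qed

lemma path_level_eq_sum:
  assumes "distinct p" "length p \<le> j"
  shows "path_level a b (map g p) j = (\<Sum>i\<in>set p. if g i = N then a else b)"
  using assms
proof (induction p)
  case (Cons x p)
  then show ?case
    by (cases "g x") (simp_all add: path_level_def cntN_def cntE_def algebra_simps)
qed (simp add: path_level_def cntN_def cntE_def)

lemma path_level_map_positions:
  assumes "distinct L" "set L \<subseteq> {1..length w}"
  shows "path_level a b (map (\<lambda>i. w ! (i - 1)) L) j
           = (\<Sum>i\<in>set (take j L). path_level a b w i - path_level a b w (i - 1))"
proof -
  have "path_level a b (map (\<lambda>i. w ! (i - 1)) L) j
          = path_level a b (map (\<lambda>i. w ! (i - 1)) (take j L)) j"
    by (simp add: path_level_def take_map)
  also have "\<dots> = (\<Sum>i\<in>set (take j L). if w ! (i - 1) = N then a else b)"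
    using assms(1) by (simp add: path_level_eq_sum)
  also have "\<dots> = (\<Sum>i\<in>set (take j L). path_level a b w i - path_level a b w (i - 1))"
  proof (rule sum.cong[OF refl])
    fix i
    assume "i \<in> set (take j L)"
    then have "1 \<le> i" "i \<le> length w"
      using assms(2) by (auto dest: in_set_takeD)
    then show "(if w ! (i - 1) = N then a else b) = path_level a b w i - path_level a b w (i - 1)"
      using path_level_increment[of i w a b] by simp
  qed
  finally show ?thesis .
qed

lemma sum_atLeast1_telescope:
  fixes h :: "nat \<Rightarrow> 'a::ab_group_add"
  shows "(\<Sum>i\<in>{1..n}. h i - h (i - 1)) = h n - h 0"
  by (induction n) (auto simp: atLeastAtMostSuc_conv)

lemma sum_increments_superlevel_nonneg:
  fixes f :: "nat \<Rightarrow> 'a::linordered_ab_group_add"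
  assumes "S \<subseteq> {1..n}" "f 0 \<le> k"
    and above: "\<forall>i\<in>S. k \<le> f i" and below: "\<forall>i\<in>{1..n} - S. f i \<le> k"
  shows "0 \<le> (\<Sum>i\<in>S. f i - f (i - 1))"
proof -
  define g where "g i = max (f i) k" for i
  have "0 \<le> g n - g 0"
    using \<open>f 0 \<le> k\<close> by (simp add: g_def)
  also have "\<dots> = (\<Sum>i\<in>{1..n}. g i - g (i - 1))"
    by (rule sum_atLeast1_telescope[symmetric])
  also have "\<dots> = (\<Sum>i\<in>{1..n} - S. g i - g (i - 1)) + (\<Sum>i\<in>S. g i - g (i - 1))"
    by (rule sum.subset_diff[OF assms(1) finite_atLeastAtMost])
  also have "\<dots> \<le> (\<Sum>i\<in>S. g i - g (i - 1))"
    using below by (simp add: sum_nonpos g_def)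
  also have "\<dots> \<le> (\<Sum>i\<in>S. f i - f (i - 1))"
    using above by (intro sum_mono) (auto simp: g_def)
  finally show ?thesis .
qed

lemma sum_increments_prefix_nonneg:
  fixes f :: "nat \<Rightarrow> 'a::linordered_ab_group_add"
  assumes sorted: "sorted_wrt (\<lambda>x y. f y \<le> f x) L" and "set L \<subseteq> {1..n}"
    and above: "\<forall>i\<in>set L. f 0 \<le> f i" and below: "\<forall>i\<in>{1..n} - set L. f i \<le> f 0"
  shows "0 \<le> (\<Sum>i\<in>set (take j L). f i - f (i - 1))"
proof (cases "take j L = []")
  case False
  define k where "k = Min (f ` set (take j L))"
  have "k \<in> f ` set (take j L)"
    unfolding k_def using False by (intro Min_in) simp_all
  then obtain m where m: "m \<in> set (take j L)" "k = f m"
    by blast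
  have "sorted_wrt (\<lambda>x y. f y \<le> f x) (take j L @ drop j L)"
    using sorted by (simp only: append_take_drop_id)
  then have "\<forall>x\<in>set (take j L). \<forall>y\<in>set (drop j L). f y \<le> f x"
    unfolding sorted_wrt_append by blast
  then have drop_below: "f i \<le> k" if "i \<in> set (drop j L)" for i
    using m that by blast
  show ?thesis
  proof (rule sum_increments_superlevel_nonneg)
    show "set (take j L) \<subseteq> {1..n}"
      using set_take_subset \<open>set L \<subseteq> {1..n}\<close> by (rule order_trans)
    show "f 0 \<le> k"
      using above m by (blast dest: in_set_takeD)
    show "\<forall>i\<in>set (take j L). k \<le> f i"
      by (simp add: k_def Min_le)
    show "\<forall>i\<in>{1..n} - set (take j L). f i \<le> k"
    proof
      fix i
      assume i: "i \<in> {1..n} - set (take j L)"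
      show "f i \<le> k"
      proof (cases "i \<in> set L")
        case True
        then have "i \<in> set (drop j L)"
          using i by (metis DiffD2 Un_iff append_take_drop_id set_append)
        then show ?thesis
          by (rule drop_below)
      next
        case False
        then have "f i \<le> f 0"
          using i below by blast
        then show ?thesis
          using \<open>f 0 \<le> k\<close> by (rule order_trans)
      qed
    qed
  qed
qed auto

lemma path_level_sorted_positions_nonneg:
  assumes "distinct L" "set L \<subseteq> {1..length w}"
    and "sorted_wrt (\<lambda>x y. path_level a b w y \<le> path_level a b w x) L"
    and "\<forall>i\<in>set L. 0 \<le> path_level a b w i"
    and "\<forall>i\<in>{1..length w} - set L. path_level a b w i \<le> 0"
  shows "0 \<le> path_level a b (map (\<lambda>i. w ! (i - 1)) L) j"
  unfolding path_level_map_positions[OF assms(1,2)]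
  by (rule sum_increments_prefix_nonneg[OF assms(3,2)]) (use assms(4,5) in \<open>simp_all only: path_level_0\<close>)

theorem beta_dyck_sweep_beta:
  assumes "beta_dyck \<beta> w"
  shows "beta_dyck \<beta> (sweep_beta \<beta> w)"
proof -
  let ?lv = "beta_level \<beta> w"
  define L where "L = sort_key (\<lambda>i. - ?lv i) (filter (\<lambda>i. 0 < ?lv i) [1..<length w + 1])"
  have nonneg: "0 \<le> ?lv i" if "i \<le> length w" for i
    using assms that by (simp add: beta_dyck_def)
  then have no_negative: "filter (\<lambda>i. ?lv i < 0) [1..<length w + 1] = []"
    by (auto simp: filter_empty_conv not_less)
  have sweep: "sweep_beta \<beta> w = map (\<lambda>i. w ! (i - 1)) L"
    unfolding sweep_beta_def Let_def no_negative L_def by simp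
  have "sorted (map (\<lambda>i. - ?lv i) L)"
    by (simp add: L_def)
  then have "sorted_wrt (\<lambda>x y. path_level 1 (- \<beta>) w y \<le> path_level 1 (- \<beta>) w x) L"
    by (simp add: sorted_map beta_level_eq_path_level)
  moreover have "distinct L" "set L = {i \<in> {1..length w}. 0 < ?lv i}"
    by (auto simp: L_def)
  ultimately have "0 \<le> path_level 1 (- \<beta>) (map (\<lambda>i. w ! (i - 1)) L) j" for j
    using nonneg by (intro path_level_sorted_positions_nonneg) (auto simp: beta_level_eq_path_level)
  then show ?thesis
    by (simp add: beta_dyck_def sweep beta_level_eq_path_level)
qed

lemma list_comprehension_filter: "[f x. x \<leftarrow> xs, P x] = map f (filter P xs)"
  by (induction xs) auto

lemma sorted_wrt_concat_level_classes:
  fixes lv :: "nat \<Rightarrow> 'a::linorder"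
  assumes "sorted_wrt (>) ks"
  shows "sorted_wrt (\<lambda>x y. lv y \<le> lv x) (concat (map (\<lambda>k. filter (\<lambda>i. lv i = k) xs) ks))"
proof -
  have "sorted_wrt (\<lambda>x y. lv y \<le> lv x) (filter (\<lambda>i. lv i = k) xs)" for k
    by (induction xs) auto
  with assms show ?thesis
    by (induction ks) (auto simp: sorted_wrt_append)
qed

lemma distinct_concat_level_classes:
  assumes "distinct ks" "distinct xs"
  shows "distinct (concat (map (\<lambda>k. filter (\<lambda>i. lv i = k) xs) ks))"
  using assms by (induction ks) auto

lemma abs_rs_level_le: "\<bar>rs_level r s w i\<bar> \<le> int (length w) * (\<bar>r\<bar> + \<bar>s\<bar>)"
proof -
  have "cntN (take i w) \<le> length w" "cntE (take i w) \<le> length w"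
    unfolding cntN_def cntE_def by (metis length_filter_le length_take min.bounded_iff)+
  then have "\<bar>r\<bar> * int (cntN (take i w)) \<le> \<bar>r\<bar> * int (length w)"
      and "\<bar>s\<bar> * int (cntE (take i w)) \<le> \<bar>s\<bar> * int (length w)"
    by (simp_all add: mult_left_mono)
  then show ?thesis
    unfolding rs_level_def by (auto simp: algebra_simps abs_mult intro: abs_triangle_ineq[THEN order_trans])
qed

theorem rs_dyck_sweep_rs:
  assumes "rs_dyck r s w"
  shows "rs_dyck r s (sweep_rs r s w)"
proof -
  let ?lv = "rs_level r s w"
  define M where "M = int (length w) * (\<bar>r\<bar> + \<bar>s\<bar>)"
  define F where "F k = filter (\<lambda>i. ?lv i = k) (rev [1..<length w + 1])" for k
  define L where "L = concat (map F (rev [0..M]))"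
  have nonneg: "\<forall>i\<in>{1..length w}. 0 \<le> ?lv i"
    using assms by (simp add: rs_dyck_def)
  have "F k = []" if "k < 0" for k
    using that nonneg unfolding F_def filter_empty_conv
    by (auto simp del: upt_Suc simp: atLeastLessThanSuc_atLeastAtMost)
  then have "concat (map (\<lambda>k. map (\<lambda>i. w ! (i - 1)) (F k)) (rev [- M..- 1])) = []"
    by simp
  then have sweep: "sweep_rs r s w = map (\<lambda>i. w ! (i - 1)) L"
    unfolding sweep_rs_def Let_def list_comprehension_filter M_def[symmetric] F_def[symmetric]
    by (simp add: L_def map_concat comp_def)
  have "sorted_wrt (>) (rev [0..M])"
    by (simp add: sorted_wrt_rev sorted_wrt_upto)
  then have "sorted_wrt (\<lambda>x y. path_level r s w y \<le> path_level r s w x) L"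
    unfolding L_def F_def rs_level_eq_path_level[symmetric] by (rule sorted_wrt_concat_level_classes)
  moreover have "distinct L"
    unfolding L_def F_def by (rule distinct_concat_level_classes) auto
  moreover have "set L = {1..length w}"
    using nonneg abs_rs_level_le[of r s w] by (fastforce simp: L_def F_def M_def abs_le_iff)
  ultimately have "0 \<le> path_level r s (map (\<lambda>i. w ! (i - 1)) L) j" for j
    using nonneg by (intro path_level_sorted_positions_nonneg) (auto simp: rs_level_eq_path_level)
  then show ?thesis
    by (simp add: rs_dyck_def sweep rs_level_eq_path_level)
qed

theorem mainTheorem1:
  shows "(\<forall>(\<beta>::real) w. \<beta> \<notin> \<rat> \<longrightarrow> beta_dyck \<beta> w \<longrightarrow> beta_dyck \<beta> (sweep_beta \<beta> w))
       \<and> (\<forall>(r::int) (s::int) w. rs_dyck r s w \<longrightarrow> rs_dyck r s (sweep_rs r s w))"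
  using beta_dyck_sweep_beta rs_dyck_sweep_rs by blast

end
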